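(* Fix constants $\mu_1,\ldots,\mu_M\ge 0$ and $P_1^{\rm ST},\ldots,P_K^{\rm ST}>0$. For a channel realization $\boldsymbol{\alpha}$ consider the problem $$\max_{p_1,\ldots,p_K}\ \log\Big(1+\sum_{k=1}^K h_kp_k\Big)-\sum_{m=1}^M\mu_m\sum_{k=1}^K g_{km}p_k\quad\text{s.t.}\quad 0\le p_k\le P_k^{\rm ST}\ \ \forall k.$$ For almost every realization $\boldsymbol{\alpha}$: if $(p_1^*,\ldots,p_K^* )$ is an optimal solution and $i,j$ are users with $p_i^*>0$ and $p_j^*=0$, then $$\frac{h_i}{\sum_{m=1}^M\mu_m g_{im}}\ \ge\ \frac{h_j}{\sum_{m=1}^M\mu_m g_{jm}}.$$
   Context: $\boldsymbol{\alpha}=(h_1,\ldots,h_K,g_{11},\ldots,g_{KM})$ is a random vector of nonnegative channel power gains ($h_k$: secondary user $k$ to secondary base station; $g_{km}$: secondary user $k$ to primary receiver $m$) with a continuous, differentiable joint cumulative distribution function, the $h_k$'s and $g_{km}$'s being independent. Convention: $x/0=+\infty$ for $x>0$. *)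

theory Defs
  imports "HOL-Probability.Probability"
begin

text \<open>Users are indexed by a finite type 'k (K = CARD('k)), primary receivers by a
finite type 'm (M = CARD('m)).  A channel realization is a pair
(h, g) :: (real^'k) \<times> (real^('k \<times> 'm)) with h $ k = h_k and g $ (k,m) = g_km.\<close>

definition feasible_power :: "real^'k \<Rightarrow> real^'k \<Rightarrow> bool" where
  "feasible_power Pst p \<longleftrightarrow> (\<forall>k. 0 \<le> p $ k \<and> p $ k \<le> Pst $ k)"

definition objective ::
  "real^'m \<Rightarrow> real^'k \<Rightarrow> real^('k \<times> 'm) \<Rightarrow> real^'k \<Rightarrow> real" where
  "objective \<mu> h g p =
     ln (1 + (\<Sum>k\<in>UNIV. h $ k * p $ k))
     - (\<Sum>m\<in>UNIV. \<mu> $ m * (\<Sum>k\<in>UNIV. g $ (k, m) * p $ k))"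

definition is_optimal ::
  "real^'m \<Rightarrow> real^'k \<Rightarrow> real^'k \<Rightarrow> real^('k \<times> 'm) \<Rightarrow> real^'k \<Rightarrow> bool" where
  "is_optimal \<mu> Pst h g p \<longleftrightarrow>
     feasible_power Pst p \<and>
     (\<forall>q. feasible_power Pst q \<longrightarrow> objective \<mu> h g q \<le> objective \<mu> h g p)"

text \<open>Extended-real quotient with the convention x / 0 = +\<infinity> (also used for 0/0,
which only occurs on a null set).\<close>
definition ediv :: "real \<Rightarrow> real \<Rightarrow> ereal" where
  "ediv x y = (if y = 0 then PInfty else ereal (x / y))"

definition joint_cdf ::
  "'a measure \<Rightarrow> ('a \<Rightarrow> (real^'k::finite) \<times> (real^('k \<times> 'm::finite))) \<Rightarrow> (real^'k) \<times> (real^('k \<times> 'm)) \<Rightarrow> real" where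
    "joint_cdf M \<alpha> z = measure M {\<omega> \<in> space M.
      (\<forall>k. fst (\<alpha> \<omega>) $ k \<le> fst z $ k) \<and> (\<forall>km. snd (\<alpha> \<omega>) $ km \<le> snd z $ km)}"

definition alpha_comp ::
  "('a \<Rightarrow> (real^'k::finite) \<times> (real^('k \<times> 'm::finite))) \<Rightarrow> 'k + ('k \<times> 'm) \<Rightarrow> 'a \<Rightarrow> real" where
  "alpha_comp \<alpha> i \<omega> = (case i of Inl k \<Rightarrow> fst (\<alpha> \<omega>) $ k | Inr km \<Rightarrow> snd (\<alpha> \<omega>) $ km)"

end

theory Submission
  imports Defs
begin

text \<open>Write \<open>S = 1 + \<Sum>k. h\<^sub>k p\<^sub>k\<close> and \<open>c\<^sub>k = \<Sum>m. \<mu>\<^sub>m g\<^sub>k\<^sub>m\<close>. At an optimum the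
objective cannot increase when an inactive user's power is raised or an active user's power is
lowered, so the one-sided first-order conditions give \<open>h\<^sub>j \<le> c\<^sub>j S\<close> and \<open>c\<^sub>i S \<le> h\<^sub>i\<close>,
hence \<open>h\<^sub>j / c\<^sub>j \<le> S \<le> h\<^sub>i / c\<^sub>i\<close>. This fails only when \<open>h\<^sub>j = c\<^sub>j = 0\<close>, where the
convention \<open>0/0 = \<infinity>\<close> applies; but a continuous joint CDF vanishes on
\<open>{z. z\<^sub>j \<le> 0}\<close> (it is a limit of values at \<open>z\<^sub>j < 0\<close>, where it is zero since
\<open>h\<^sub>j \<ge> 0\<close>), so \<open>h\<^sub>j \<noteq> 0\<close> almost surely.\<close>

definition interference_cost :: "real^'m::finite \<Rightarrow> real^('k::finite \<times> 'm) \<Rightarrow> 'k \<Rightarrow> real" where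
  "interference_cost \<mu> g k = (\<Sum>m\<in>UNIV. \<mu> $ m * g $ (k, m))"

lemma objective_eq_cost_form:
  "objective \<mu> h g p =
     ln (1 + (\<Sum>k\<in>UNIV. h $ k * p $ k)) - (\<Sum>k\<in>UNIV. interference_cost \<mu> g k * p $ k)"
proof -
  have "(\<Sum>m\<in>UNIV. \<mu> $ m * (\<Sum>k\<in>UNIV. g $ (k, m) * p $ k))
      = (\<Sum>k\<in>UNIV. \<Sum>m\<in>UNIV. \<mu> $ m * g $ (k, m) * p $ k)"
    by (subst sum.swap) (simp add: sum_distrib_left mult.assoc)
  then show ?thesis
    by (simp add: objective_def interference_cost_def sum_distrib_right)
qed

lemma sum_mult_plus_axis:
  fixes a :: "'k::finite \<Rightarrow> real"
  shows "(\<Sum>k\<in>UNIV. a k * (p + t *\<^sub>R axis l 1) $ k) = (\<Sum>k\<in>UNIV. a k * p $ k) + a l * t"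
  by (simp add: axis_def distrib_left sum.distrib if_distrib[of "(*) _"] cong: if_cong)

lemma objective_along_axis:
  "objective \<mu> h g (p + t *\<^sub>R axis l 1) =
     ln (1 + (\<Sum>k\<in>UNIV. h $ k * p $ k) + h $ l * t)
     - ((\<Sum>k\<in>UNIV. interference_cost \<mu> g k * p $ k) + interference_cost \<mu> g l * t)"
  unfolding objective_eq_cost_form sum_mult_plus_axis by (simp add: add.assoc)

lemma DERIV_nonpos_if_max_on_right:
  fixes f :: "real \<Rightarrow> real"
  assumes "DERIV f x :> D" "0 < d" "\<And>t. 0 < t \<Longrightarrow> t \<le> d \<Longrightarrow> f (x + t) \<le> f x"
  shows "D \<le> 0"
proof (rule ccontr)
  assume "\<not> D \<le> 0"
  then obtain e where e: "0 < e" and incr: "\<And>t. 0 < t \<Longrightarrow> t < e \<Longrightarrow> f x < f (x + t)"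
    using DERIV_pos_inc_right[OF assms(1)] by force
  have "f x < f (x + min d (e/2))" using e assms(2) by (intro incr) auto
  moreover have "f (x + min d (e/2)) \<le> f x" using e assms(2) by (intro assms(3)) auto
  ultimately show False by simp
qed

lemma DERIV_nonneg_if_max_on_left:
  fixes f :: "real \<Rightarrow> real"
  assumes "DERIV f x :> D" "0 < d" "\<And>t. 0 < t \<Longrightarrow> t \<le> d \<Longrightarrow> f (x - t) \<le> f x"
  shows "0 \<le> D"
proof (rule ccontr)
  assume "\<not> 0 \<le> D"
  then obtain e where e: "0 < e" and incr: "\<And>t. 0 < t \<Longrightarrow> t < e \<Longrightarrow> f x < f (x - t)"
    using DERIV_neg_dec_left[OF assms(1)] by force
  have "f x < f (x - min d (e/2))" using e assms(2) by (intro incr) auto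
  moreover have "f (x - min d (e/2)) \<le> f x" using e assms(2) by (intro assms(3)) auto
  ultimately show False by simp
qed

lemma DERIV_objective_along_axis:
  assumes "0 < 1 + (\<Sum>k\<in>UNIV. h $ k * p $ k)"
  shows "DERIV (\<lambda>t. objective \<mu> h g (p + t *\<^sub>R axis l 1)) 0 :>
           h $ l / (1 + (\<Sum>k\<in>UNIV. h $ k * p $ k)) - interference_cost \<mu> g l"
  unfolding objective_along_axis using assms
  by (auto intro!: derivative_eq_intros)

lemma feasible_power_plus_axis:
  assumes "feasible_power Pst p" "- p $ l \<le> t" "t \<le> Pst $ l - p $ l"
  shows "feasible_power Pst (p + t *\<^sub>R axis l 1)"
  using assms by (auto simp: feasible_power_def axis_def)

lemma feasible_rate_pos:
  assumes "feasible_power Pst p" "\<forall>k. 0 \<le> h $ k"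
  shows "0 < 1 + (\<Sum>k\<in>UNIV. h $ k * p $ k)"
proof -
  have "0 \<le> (\<Sum>k\<in>UNIV. h $ k * p $ k)"
    using assms by (auto simp: feasible_power_def intro!: sum_nonneg)
  then show ?thesis by linarith
qed

lemma optimal_gain_le_cost_below_cap:
  assumes opt: "is_optimal \<mu> Pst h g p" and h: "\<forall>k. 0 \<le> h $ k" and cap: "p $ l < Pst $ l"
  shows "h $ l \<le> interference_cost \<mu> g l * (1 + (\<Sum>k\<in>UNIV. h $ k * p $ k))"
proof -
  have feas: "feasible_power Pst p" using opt by (simp add: is_optimal_def)
  have S: "0 < 1 + (\<Sum>k\<in>UNIV. h $ k * p $ k)" using feasible_rate_pos[OF feas h] .
  have bounds: "0 \<le> p $ l" "p $ l \<le> Pst $ l" using feas by (simp_all add: feasible_power_def)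
  have "h $ l / (1 + (\<Sum>k\<in>UNIV. h $ k * p $ k)) - interference_cost \<mu> g l \<le> 0"
  proof (rule DERIV_nonpos_if_max_on_right[OF DERIV_objective_along_axis[OF S]])
    show "0 < Pst $ l - p $ l" using cap by simp
    fix t :: real assume "0 < t" "t \<le> Pst $ l - p $ l"
    then have "feasible_power Pst (p + (0 + t) *\<^sub>R axis l 1)"
      using feas bounds by (intro feasible_power_plus_axis) auto
    then show "objective \<mu> h g (p + (0 + t) *\<^sub>R axis l 1) \<le> objective \<mu> h g (p + 0 *\<^sub>R axis l 1)"
      using opt by (simp add: is_optimal_def)
  qed
  with S show ?thesis by (simp add: divide_le_eq mult.commute)
qed

lemma optimal_cost_le_gain_if_active:
  assumes opt: "is_optimal \<mu> Pst h g p" and h: "\<forall>k. 0 \<le> h $ k" and active: "0 < p $ l"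
  shows "interference_cost \<mu> g l * (1 + (\<Sum>k\<in>UNIV. h $ k * p $ k)) \<le> h $ l"
proof -
  have feas: "feasible_power Pst p" using opt by (simp add: is_optimal_def)
  have S: "0 < 1 + (\<Sum>k\<in>UNIV. h $ k * p $ k)" using feasible_rate_pos[OF feas h] .
  have bounds: "0 \<le> p $ l" "p $ l \<le> Pst $ l" using feas by (simp_all add: feasible_power_def)
  have "0 \<le> h $ l / (1 + (\<Sum>k\<in>UNIV. h $ k * p $ k)) - interference_cost \<mu> g l"
  proof (rule DERIV_nonneg_if_max_on_left[OF DERIV_objective_along_axis[OF S]])
    show "0 < p $ l" by (fact active)
    fix t :: real assume "0 < t" "t \<le> p $ l"
    then have "feasible_power Pst (p + (0 - t) *\<^sub>R axis l 1)"
      using feas bounds by (intro feasible_power_plus_axis) auto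
    then show "objective \<mu> h g (p + (0 - t) *\<^sub>R axis l 1) \<le> objective \<mu> h g (p + 0 *\<^sub>R axis l 1)"
      using opt by (simp add: is_optimal_def)
  qed
  with S show ?thesis by (simp add: le_divide_eq mult.commute)
qed

lemma ediv_le_ediv_through_threshold:
  assumes "0 < a" "a \<le> b * s" "d * s \<le> c" "0 \<le> d" "0 < s"
  shows "ediv a b \<le> ediv c d"
proof (cases "d = 0")
  case False
  have "0 < b" using assms by (smt (verit) mult_nonpos_nonneg)
  have "a / b \<le> s" using assms(2) \<open>0 < b\<close> by (simp add: divide_le_eq mult.commute)
  also have "s \<le> c / d" using assms(3,4) False by (simp add: le_divide_eq mult.commute)
  finally show ?thesis using \<open>0 < b\<close> False by (simp add: ediv_def)
qed (simp add: ediv_def)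

lemma optimal_active_ratio_ge_inactive_ratio:
  assumes opt: "is_optimal \<mu> Pst h g p" and h: "\<forall>k. 0 \<le> h $ k"
    and \<mu>: "\<forall>m. 0 \<le> \<mu> $ m" and g: "\<forall>km. 0 \<le> g $ km"
    and cap: "0 < Pst $ j" and gain: "h $ j \<noteq> 0" and active: "0 < p $ i" and inactive: "p $ j = 0"
  shows "ediv (h $ j) (interference_cost \<mu> g j) \<le> ediv (h $ i) (interference_cost \<mu> g i)"
proof (rule ediv_le_ediv_through_threshold)
  show "0 < h $ j" using h gain by (metis order_le_less)
  show "h $ j \<le> interference_cost \<mu> g j * (1 + (\<Sum>k\<in>UNIV. h $ k * p $ k))"
    using cap inactive by (intro optimal_gain_le_cost_below_cap[OF opt h]) simp
  show "interference_cost \<mu> g i * (1 + (\<Sum>k\<in>UNIV. h $ k * p $ k)) \<le> h $ i"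
    using optimal_cost_le_gain_if_active[OF opt h active] .
  show "0 < 1 + (\<Sum>k\<in>UNIV. h $ k * p $ k)"
    using opt h by (intro feasible_rate_pos) (auto simp: is_optimal_def)
  show "0 \<le> interference_cost \<mu> g i"
    using \<mu> g by (auto simp: interference_cost_def intro!: sum_nonneg)
qed

lemma joint_cdf_event_in_sets:
  fixes \<alpha> :: "'a \<Rightarrow> (real^'k::finite) \<times> (real^('k \<times> 'm::finite))"
  assumes \<alpha>: "\<alpha> \<in> borel_measurable M"
  shows "{\<omega> \<in> space M. (\<forall>k. fst (\<alpha> \<omega>) $ k \<le> fst z $ k) \<and> (\<forall>km. snd (\<alpha> \<omega>) $ km \<le> snd z $ km)}
           \<in> sets M"
proof -
  have [measurable]: "(\<lambda>\<omega>. fst (\<alpha> \<omega>) $ k) \<in> borel_measurable M" "(\<lambda>\<omega>. snd (\<alpha> \<omega>) $ km) \<in> borel_measurable M"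
    for k km
    by (auto intro!: measurable_compose[OF \<alpha>] borel_measurable_continuous_onI continuous_intros)
  show ?thesis by measurable
qed

lemma joint_cdf_eq_0_if_gain_bound_neg:
  assumes "\<forall>\<omega>\<in>space M. 0 \<le> fst (\<alpha> \<omega>) $ j" and "fst z $ j < 0"
  shows "joint_cdf M \<alpha> z = 0"
proof -
  have "{\<omega> \<in> space M. (\<forall>k. fst (\<alpha> \<omega>) $ k \<le> fst z $ k) \<and> (\<forall>km. snd (\<alpha> \<omega>) $ km \<le> snd z $ km)} = {}"
    using assms by (force dest: spec[of _ j])
  then show ?thesis by (simp only: joint_cdf_def measure_empty)
qed

lemma joint_cdf_eq_0_if_gain_bound_nonpos:
  assumes nonneg: "\<forall>\<omega>\<in>space M. 0 \<le> fst (\<alpha> \<omega>) $ j"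
    and cont: "continuous_on UNIV (joint_cdf M \<alpha>)" and "fst z $ j \<le> 0"
  shows "joint_cdf M \<alpha> z = 0"
proof -
  define w where "w n = (fst z - inverse (real (Suc n)) *\<^sub>R axis j 1, snd z)" for n
  have "w \<longlonglongrightarrow> (fst z - 0 *\<^sub>R axis j 1, snd z)"
    unfolding w_def by (intro tendsto_intros LIMSEQ_inverse_real_of_nat)
  then have "(\<lambda>n. joint_cdf M \<alpha> (w n)) \<longlonglongrightarrow> joint_cdf M \<alpha> z"
    by (intro continuous_on_tendsto_compose[OF cont]) auto
  moreover have "joint_cdf M \<alpha> (w n) = 0" for n
  proof (rule joint_cdf_eq_0_if_gain_bound_neg[OF nonneg])
    have "fst (w n) $ j = fst z $ j - inverse (real (Suc n))" by (simp add: w_def axis_def)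
    moreover have "0 < inverse (real (Suc n))" by simp
    ultimately show "fst (w n) $ j < 0" using assms(3) by linarith
  qed
  ultimately show ?thesis by (simp add: LIMSEQ_const_iff)
qed

lemma AE_gain_nonzero:
  fixes \<alpha> :: "'a \<Rightarrow> (real^'k::finite) \<times> (real^('k \<times> 'm::finite))"
  assumes "prob_space M" and \<alpha>: "\<alpha> \<in> borel_measurable M"
    and nonneg: "\<forall>\<omega>\<in>space M. 0 \<le> fst (\<alpha> \<omega>) $ j"
    and cont: "continuous_on UNIV (joint_cdf M \<alpha>)"
  shows "AE \<omega> in M. fst (\<alpha> \<omega>) $ j \<noteq> 0"
proof -
  interpret prob_space M by fact
  define z :: "nat \<Rightarrow> (real^'k) \<times> (real^('k \<times> 'm))"
    where "z n = (\<chi> k. if k = j then 0 else real n, \<chi> km. real n)" for n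
  define B where "B n = {\<omega> \<in> space M.
      (\<forall>k. fst (\<alpha> \<omega>) $ k \<le> fst (z n) $ k) \<and> (\<forall>km. snd (\<alpha> \<omega>) $ km \<le> snd (z n) $ km)}" for n
  have "measure M (B n) = 0" for n
  proof -
    have "measure M (B n) = joint_cdf M \<alpha> (z n)" by (simp only: B_def joint_cdf_def)
    also have "\<dots> = 0" by (rule joint_cdf_eq_0_if_gain_bound_nonpos[OF nonneg cont]) (simp add: z_def)
    finally show ?thesis .
  qed
  then have "B n \<in> null_sets M" for n
    using joint_cdf_event_in_sets[OF \<alpha>] by (simp add: B_def emeasure_eq_measure null_sets_def)
  then have "AE \<omega> in M. \<forall>n. \<omega> \<notin> B n"
    by (simp add: AE_all_countable AE_not_in)
  with AE_space show ?thesis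
  proof eventually_elim
    case (elim \<omega>)
    define n where "n = nat \<lceil>norm (fst (\<alpha> \<omega>)) + norm (snd (\<alpha> \<omega>))\<rceil>"
    have "norm (fst (\<alpha> \<omega>)) \<le> real n" "norm (snd (\<alpha> \<omega>)) \<le> real n"
      unfolding n_def by (smt (verit) norm_ge_zero real_nat_ceiling_ge)+
    then have "fst (\<alpha> \<omega>) $ k \<le> real n" "snd (\<alpha> \<omega>) $ km \<le> real n" for k km
      using component_le_norm_cart[of "fst (\<alpha> \<omega>)" k] component_le_norm_cart[of "snd (\<alpha> \<omega>)" km]
      by linarith+
    with elim have "\<omega> \<in> B n" if "fst (\<alpha> \<omega>) $ j = 0"
      using that by (simp add: B_def z_def)
    with elim show ?case by blast
  qed
qed

lemma alpha_comp_nonneg_iff: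
  "(\<forall>i. 0 \<le> alpha_comp \<alpha> i \<omega>) \<longleftrightarrow> (\<forall>k. 0 \<le> fst (\<alpha> \<omega>) $ k) \<and> (\<forall>km. 0 \<le> snd (\<alpha> \<omega>) $ km)"
  by (auto simp: alpha_comp_def split: sum.split)

theorem lemma3p4:
  fixes M :: "'a measure"
    and \<alpha> :: "'a \<Rightarrow> (real^'k::finite) \<times> (real^('k \<times> 'm::finite))"
    and \<mu> :: "real^'m" and Pst :: "real^'k"
  assumes "prob_space M"
    and "\<alpha> \<in> borel_measurable M"
    and "\<forall>\<omega>\<in>space M. \<forall>i. 0 \<le> alpha_comp \<alpha> i \<omega>"
    and "prob_space.indep_vars M (\<lambda>_. borel) (alpha_comp \<alpha>) UNIV"
    and "continuous_on UNIV (joint_cdf M \<alpha>)"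
    and "\<forall>z. joint_cdf M \<alpha> differentiable (at z)"
    and "\<forall>m. 0 \<le> \<mu> $ m"
    and "\<forall>k. 0 < Pst $ k"
  shows "AE \<omega> in M. \<forall>p i j.
           is_optimal \<mu> Pst (fst (\<alpha> \<omega>)) (snd (\<alpha> \<omega>)) p \<and> 0 < p $ i \<and> p $ j = 0 \<longrightarrow>
           ediv (fst (\<alpha> \<omega>) $ i) (\<Sum>m\<in>UNIV. \<mu> $ m * snd (\<alpha> \<omega>) $ (i, m))
             \<ge> ediv (fst (\<alpha> \<omega>) $ j) (\<Sum>m\<in>UNIV. \<mu> $ m * snd (\<alpha> \<omega>) $ (j, m))"
proof -
  have nonneg: "\<forall>k. 0 \<le> fst (\<alpha> \<omega>) $ k" "\<forall>km. 0 \<le> snd (\<alpha> \<omega>) $ km" if "\<omega> \<in> space M" for \<omega>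
    using assms(3) that by (simp_all add: alpha_comp_nonneg_iff)
  have "AE \<omega> in M. \<forall>j\<in>UNIV. fst (\<alpha> \<omega>) $ j \<noteq> 0"
    using nonneg by (intro AE_finite_allI AE_gain_nonzero[OF assms(1,2) _ assms(5)]) auto
  with AE_space show ?thesis
  proof eventually_elim
    case (elim \<omega>)
    then show ?case
      using optimal_active_ratio_ge_inactive_ratio[OF _ nonneg(1) assms(7) nonneg(2)] assms(8)
      by (auto simp: interference_cost_def)
  qed
qed

end
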